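(* Let $(E,\mathcal{E},\nu)$ be a $\sigma$-finite measure space, $\phi$ a Young function satisfying the $\Delta_2$-condition, $w$ a weight function, and $\Psi:E\to E$ a non-singular measurable transformation such that the composition operator $C_\Psi f=f\circ\Psi$ is a bounded linear operator on the Orlicz-Lorentz space $L_{(\phi,w)}$. If $\Psi$ is pre-positive, then $\mathcal{A}(C_\Psi)<\infty$.
   Context: A Young function is a convex $\phi:[0,\infty)\to[0,\infty)$ with $\phi(x)=0\iff x=0$ and $\lim_{x\to\infty}\phi(x)=\infty$; $\Delta_2$-condition: $\phi(2x)\le k\phi(x)$ for some $k>0$ and all $x>0$. A weight function is a non-increasing locally integrable $w:(0,\infty)\to(0,\infty)$ with $\int_0^\infty w=\infty$. For measurable $f$, $\nu_f(s)=\nu\{|f|>s\}$, $f^*(t)=\inf\{s>0:\nu_f(s)\le t\}$; $L_{(\phi,w)}$ is the space of measurable $f:E\to\mathbb{C}$ with $\int_0^\infty\phi(\alpha f^*(t))w(t)\,dt<\infty$ for some $\alpha>0$, with the Luxemburg norm. $\Psi$ non-singular: $\nu(\Psi^{-1}(S))=0$ whenever $\nu(S)=0$. $\Psi$ is pre-positive if $\nu(\Psi^{-1}(A))>0$ whenever $\nu(A)>0$. The ascent $\mathcal{A}(T)$ is the smallest integer $m$ with $\mathcal{N}(T^m)=\mathcal{N}(T^{m+1})$ ($\mathcal{N}$ = kernel), and $\infty$ if no such $m$ exists. *)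

theory Defs
  imports "HOL-Analysis.Analysis"
begin

definition young_function :: "(real \<Rightarrow> real) \<Rightarrow> bool" where
  "young_function \<phi> \<longleftrightarrow> convex_on {0..} \<phi> \<and> (\<forall>x\<ge>0. \<phi> x \<ge> 0)
     \<and> (\<forall>x\<ge>0. \<phi> x = 0 \<longleftrightarrow> x = 0) \<and> filterlim \<phi> at_top at_top"

definition delta2 :: "(real \<Rightarrow> real) \<Rightarrow> bool" where
  "delta2 \<phi> \<longleftrightarrow> (\<exists>k>0. \<forall>x>0. \<phi> (2 * x) \<le> k * \<phi> x)"

text \<open>Weight function on (0,infinity); local integrability read as integrability on every (0,t].\<close>
definition weight_function :: "(real \<Rightarrow> real) \<Rightarrow> bool" where
  "weight_function w \<longleftrightarrow> (\<forall>t>0. w t > 0)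
     \<and> (\<forall>s t. 0 < s \<longrightarrow> s \<le> t \<longrightarrow> w t \<le> w s)
     \<and> w \<in> borel_measurable lborel
     \<and> (\<forall>t>0. (\<integral>\<^sup>+ s\<in>{0<..t}. ennreal (w s) \<partial>lborel) < \<infinity>)
     \<and> (\<integral>\<^sup>+ s\<in>{0<..}. ennreal (w s) \<partial>lborel) = \<infinity>"

definition distrib_fun :: "'a measure \<Rightarrow> ('a \<Rightarrow> complex) \<Rightarrow> real \<Rightarrow> ennreal" where
  "distrib_fun M f s = emeasure M {x \<in> space M. cmod (f x) > s}"

text \<open>Decreasing rearrangement f*(t) = inf{s>0 : nu_f(s) <= t} (infinity if the set is empty).\<close>
definition rearr :: "'a measure \<Rightarrow> ('a \<Rightarrow> complex) \<Rightarrow> real \<Rightarrow> ennreal" where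
  "rearr M f t = Inf (ennreal ` {s. s > 0 \<and> distrib_fun M f s \<le> ennreal t})"

definition phi_ext :: "(real \<Rightarrow> real) \<Rightarrow> ennreal \<Rightarrow> ennreal" where
  "phi_ext \<phi> x = (if x = \<infinity> then \<infinity> else ennreal (\<phi> (enn2real x)))"

definition OL_modular :: "'a measure \<Rightarrow> (real \<Rightarrow> real) \<Rightarrow> (real \<Rightarrow> real) \<Rightarrow> real \<Rightarrow> ('a \<Rightarrow> complex) \<Rightarrow> ennreal" where
  "OL_modular M \<phi> w \<alpha> f = (\<integral>\<^sup>+ t\<in>{0<..}. phi_ext \<phi> (ennreal \<alpha> * rearr M f t) * ennreal (w t) \<partial>lborel)"

definition OL_space :: "'a measure \<Rightarrow> (real \<Rightarrow> real) \<Rightarrow> (real \<Rightarrow> real) \<Rightarrow> ('a \<Rightarrow> complex) set" where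
  "OL_space M \<phi> w = {f. f \<in> borel_measurable M \<and> (\<exists>\<alpha>>0. OL_modular M \<phi> w \<alpha> f < \<infinity>)}"

definition lux_norm :: "'a measure \<Rightarrow> (real \<Rightarrow> real) \<Rightarrow> (real \<Rightarrow> real) \<Rightarrow> ('a \<Rightarrow> complex) \<Rightarrow> real" where
  "lux_norm M \<phi> w f = Inf {c. c > 0 \<and> OL_modular M \<phi> w (1 / c) f \<le> 1}"

definition nonsingular :: "'a measure \<Rightarrow> ('a \<Rightarrow> 'a) \<Rightarrow> bool" where
  "nonsingular M \<Psi> \<longleftrightarrow> (\<forall>S\<in>sets M. emeasure M S = 0 \<longrightarrow> emeasure M (\<Psi> -` S \<inter> space M) = 0)"

definition pre_positive :: "'a measure \<Rightarrow> ('a \<Rightarrow> 'a) \<Rightarrow> bool" where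
  "pre_positive M \<Psi> \<longleftrightarrow> (\<forall>A\<in>sets M. emeasure M A > 0 \<longrightarrow> emeasure M (\<Psi> -` A \<inter> space M) > 0)"

definition bounded_comp_OL :: "'a measure \<Rightarrow> (real \<Rightarrow> real) \<Rightarrow> (real \<Rightarrow> real) \<Rightarrow> ('a \<Rightarrow> 'a) \<Rightarrow> bool" where
  "bounded_comp_OL M \<phi> w \<Psi> \<longleftrightarrow> (\<exists>C. \<forall>f\<in>OL_space M \<phi> w.
      f \<circ> \<Psi> \<in> OL_space M \<phi> w \<and> lux_norm M \<phi> w (f \<circ> \<Psi>) \<le> C * lux_norm M \<phi> w f)"

text \<open>Kernel of (C_Psi)^m on L_(phi,w); zero in L_(phi,w) means zero almost everywhere.\<close>
definition comp_kernel :: "'a measure \<Rightarrow> (real \<Rightarrow> real) \<Rightarrow> (real \<Rightarrow> real) \<Rightarrow> ('a \<Rightarrow> 'a) \<Rightarrow> nat \<Rightarrow> ('a \<Rightarrow> complex) set" where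
  "comp_kernel M \<phi> w \<Psi> m = {f \<in> OL_space M \<phi> w. AE x in M. f ((\<Psi> ^^ m) x) = 0}"

definition comp_ascent :: "'a measure \<Rightarrow> (real \<Rightarrow> real) \<Rightarrow> (real \<Rightarrow> real) \<Rightarrow> ('a \<Rightarrow> 'a) \<Rightarrow> enat" where
  "comp_ascent M \<phi> w \<Psi> =
     (if \<exists>m. comp_kernel M \<phi> w \<Psi> m = comp_kernel M \<phi> w \<Psi> (Suc m)
      then enat (LEAST m. comp_kernel M \<phi> w \<Psi> m = comp_kernel M \<phi> w \<Psi> (Suc m))
      else \<infinity>)"

end

theory Submission
  imports Defs
begin

text \<open>A pre-positive non-singular transformation preserves and reflects null sets, so
  \<open>f \<circ> \<Psi> = 0\<close> a.e. exactly when \<open>f = 0\<close> a.e.: the composition operator is injective and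
  its ascent is \<open>0\<close>.\<close>

lemma nonsingular_AE_comp:
  assumes "\<Psi> \<in> measurable M M" and "nonsingular M \<Psi>"
    and "AE x in M. P x"
  shows "AE x in M. P (\<Psi> x)"
proof -
  obtain N where N: "{x \<in> space M. \<not> P x} \<subseteq> N" "N \<in> sets M" "emeasure M N = 0"
    using assms(3) by (auto elim: AE_E)
  have "emeasure M (\<Psi> -` N \<inter> space M) = 0"
    using assms(2) N(2,3) unfolding nonsingular_def by blast
  moreover have "\<Psi> -` N \<inter> space M \<in> sets M"
    using assms(1) N(2) by (rule measurable_sets)
  moreover have "{x \<in> space M. \<not> P (\<Psi> x)} \<subseteq> \<Psi> -` N \<inter> space M"
    using N(1) measurable_space[OF assms(1)] by auto
  ultimately show ?thesis
    by (blast intro: AE_I)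
qed

lemma pre_positive_AE_comp_imp:
  assumes "\<Psi> \<in> measurable M M" and "pre_positive M \<Psi>"
    and P: "{x \<in> space M. \<not> P x} \<in> sets M"
    and "AE x in M. P (\<Psi> x)"
  shows "AE x in M. P x"
proof -
  have preimage: "\<Psi> -` {x \<in> space M. \<not> P x} \<inter> space M = {x \<in> space M. \<not> P (\<Psi> x)}"
    using measurable_space[OF assms(1)] by auto
  have "{x \<in> space M. \<not> P (\<Psi> x)} \<in> sets M"
    unfolding preimage[symmetric] using assms(1) P by (rule measurable_sets)
  then have "emeasure M (\<Psi> -` {x \<in> space M. \<not> P x} \<inter> space M) = 0"
    using assms(4) unfolding preimage by (simp add: AE_iff_measurable)
  then have "emeasure M {x \<in> space M. \<not> P x} = 0"
    using assms(2) P unfolding pre_positive_def by (metis not_gr_zero)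
  then show ?thesis
    using P by (simp add: AE_iff_measurable)
qed

lemma comp_kernel_Suc_0_eq_comp_kernel_0:
  assumes "\<Psi> \<in> measurable M M" and "nonsingular M \<Psi>" and "pre_positive M \<Psi>"
  shows "comp_kernel M \<phi> w \<Psi> (Suc 0) = comp_kernel M \<phi> w \<Psi> 0"
proof (intro set_eqI iffI)
  fix f assume f: "f \<in> comp_kernel M \<phi> w \<Psi> (Suc 0)"
  then have "{x \<in> space M. \<not> f x = 0} \<in> sets M"
    by (auto simp: comp_kernel_def OL_space_def)
  with f show "f \<in> comp_kernel M \<phi> w \<Psi> 0"
    using pre_positive_AE_comp_imp[OF assms(1,3)] by (simp add: comp_kernel_def)
next
  fix f assume "f \<in> comp_kernel M \<phi> w \<Psi> 0"
  then show "f \<in> comp_kernel M \<phi> w \<Psi> (Suc 0)"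
    using nonsingular_AE_comp[OF assms(1,2), of "\<lambda>x. f x = 0"] by (simp add: comp_kernel_def)
qed

lemma comp_ascent_eq_0:
  assumes "\<Psi> \<in> measurable M M" and "nonsingular M \<Psi>" and "pre_positive M \<Psi>"
  shows "comp_ascent M \<phi> w \<Psi> = 0"
  using comp_kernel_Suc_0_eq_comp_kernel_0[OF assms, of \<phi> w, symmetric]
  unfolding comp_ascent_def by (auto intro: Least_equality simp: zero_enat_def)

theorem theorem3p6:
  fixes M :: "'a measure" and \<phi> w :: "real \<Rightarrow> real" and \<Psi> :: "'a \<Rightarrow> 'a"
  assumes "sigma_finite_measure M"
    and "young_function \<phi>" and "delta2 \<phi>"
    and "weight_function w"
    and "\<Psi> \<in> measurable M M" and "nonsingular M \<Psi>"
    and "bounded_comp_OL M \<phi> w \<Psi>"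
    and "pre_positive M \<Psi>"
  shows "comp_ascent M \<phi> w \<Psi> < \<infinity>"
  using comp_ascent_eq_0[OF assms(5,6,8)] by simp

end
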